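(* Let $1\le t_1<t_2$ and $n\ge t_1+t_2$ be integers, let $G=G_n\langle t_1,t_2\rangle$ and $d=\gcd(t_1,t_2)$. Then the following are equivalent: (i) $(t_1+t_2)/d$ is even or $(t_1+t_2)/d=3$; (ii) $G$ contains no odd hole; (iii) $G$ is perfect; (iv) $G$ is weakly perfect.
   Context: For integers $n\ge 2$, $k\ge 1$ and $1\le t_1<t_2<\cdots<t_k\le n-1$, the Toeplitz graph $G_n\langle t_1,\ldots,t_k\rangle$ is the simple graph with vertex set $[n]=\{1,\ldots,n\}$ in which two distinct vertices $i,j$ are adjacent if and only if $|i-j|\in\{t_1,\ldots,t_k\}$. A hole is an induced (chordless) cycle of length at least $4$; an odd hole is a hole with an odd number of vertices. A graph $G$ is perfect if $\omega(H)=\chi(H)$ for every induced subgraph $H$ of $G$, and weakly perfect if $\omega(G)=\chi(G)$, where $\omega$ is the clique number and $\chi$ the chromatic number. *)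

theory Defs
  imports Main
begin

text \<open>Simple graphs are given by a vertex set V and a symmetric irreflexive
adjacency predicate E (only its restriction to V matters).\<close>

definition toeplitz_adj :: "nat \<Rightarrow> nat set \<Rightarrow> nat \<Rightarrow> nat \<Rightarrow> bool" where
  "toeplitz_adj n T i j \<longleftrightarrow>
     i \<in> {1..n} \<and> j \<in> {1..n} \<and> i \<noteq> j \<and> nat \<bar>int i - int j\<bar> \<in> T"

definition toeplitz_vertices :: "nat \<Rightarrow> nat set" where
  "toeplitz_vertices n = {1..n}"

definition is_clique :: "'a set \<Rightarrow> ('a \<Rightarrow> 'a \<Rightarrow> bool) \<Rightarrow> 'a set \<Rightarrow> bool" where
  "is_clique V E K \<longleftrightarrow> K \<subseteq> V \<and> (\<forall>x\<in>K. \<forall>y\<in>K. x \<noteq> y \<longrightarrow> E x y)"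

definition clique_number :: "'a set \<Rightarrow> ('a \<Rightarrow> 'a \<Rightarrow> bool) \<Rightarrow> nat" where
  "clique_number V E = Max {card K | K. is_clique V E K}"

definition proper_colouring :: "'a set \<Rightarrow> ('a \<Rightarrow> 'a \<Rightarrow> bool) \<Rightarrow> nat \<Rightarrow> ('a \<Rightarrow> nat) \<Rightarrow> bool" where
  "proper_colouring V E k f \<longleftrightarrow>
     (\<forall>x\<in>V. f x < k) \<and> (\<forall>x\<in>V. \<forall>y\<in>V. E x y \<longrightarrow> f x \<noteq> f y)"

definition chromatic_number :: "'a set \<Rightarrow> ('a \<Rightarrow> 'a \<Rightarrow> bool) \<Rightarrow> nat" where
  "chromatic_number V E = (LEAST k. \<exists>f. proper_colouring V E k f)"

definition is_hole :: "'a set \<Rightarrow> ('a \<Rightarrow> 'a \<Rightarrow> bool) \<Rightarrow> 'a list \<Rightarrow> bool" where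
  "is_hole V E vs \<longleftrightarrow> length vs \<ge> 4 \<and> distinct vs \<and> set vs \<subseteq> V \<and>
     (\<forall>i<length vs. \<forall>j<length vs.
        E (vs ! i) (vs ! j) \<longleftrightarrow> (j = Suc i mod length vs \<or> i = Suc j mod length vs))"

definition has_odd_hole :: "'a set \<Rightarrow> ('a \<Rightarrow> 'a \<Rightarrow> bool) \<Rightarrow> bool" where
  "has_odd_hole V E \<longleftrightarrow> (\<exists>vs. is_hole V E vs \<and> odd (length vs))"

definition perfect :: "'a set \<Rightarrow> ('a \<Rightarrow> 'a \<Rightarrow> bool) \<Rightarrow> bool" where
  "perfect V E \<longleftrightarrow> (\<forall>H\<subseteq>V. clique_number H E = chromatic_number H E)"

definition weakly_perfect :: "'a set \<Rightarrow> ('a \<Rightarrow> 'a \<Rightarrow> bool) \<Rightarrow> bool" where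
  "weakly_perfect V E \<longleftrightarrow> clique_number V E = chromatic_number V E"

end

theory Submission
  imports Defs "HOL-Number_Theory.Cong"
begin

text \<open>Write \<open>t\<^sub>1 = d a\<close>, \<open>t\<^sub>2 = d b\<close> with \<open>a\<close>, \<open>b\<close> coprime, and \<open>s = a + b\<close>.
  If \<open>s\<close> is even, then \<open>a\<close> and \<open>b\<close> are odd and the parity of \<open>x div d\<close> is a proper
  2-colouring, so every induced subgraph is bipartite. If \<open>s = 3\<close>, the graph is
  \<open>G\<^sub>n\<langle>d, 2d\<rangle>\<close>: it has no holes at all, an induced subgraph containing a triangle is
  3-coloured by \<open>x div d mod 3\<close>, and a triangle-free one is 2-coloured greedily.
  Otherwise \<open>s \<ge> 5\<close> is odd, the vertices \<open>1 + d (i a mod s)\<close> for \<open>i < s\<close> form an odd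
  hole, and \<open>t\<^sub>2 \<noteq> 2 t\<^sub>1\<close> makes the graph triangle-free, so \<open>\<omega> = 2 < 3 \<le> \<chi>\<close>.\<close>

section \<open>Cliques, colourings and holes\<close>

lemma finite_clique_sizes:
  assumes "finite V"
  shows "finite {card K | K. is_clique V E K}"
proof (rule finite_subset)
  show "{card K | K. is_clique V E K} \<subseteq> {..card V}"
    using assms by (auto simp: is_clique_def intro: card_mono)
qed simp

lemma card_le_clique_number:
  assumes "finite V" "is_clique V E K"
  shows "card K \<le> clique_number V E"
  unfolding clique_number_def using finite_clique_sizes[OF assms(1)] assms(2)
  by (intro Max_ge) auto

lemma clique_number_le:
  assumes "finite V" "\<And>K. is_clique V E K \<Longrightarrow> card K \<le> k"
  shows "clique_number V E \<le> k"
  unfolding clique_number_def using finite_clique_sizes[OF assms(1)] assms(2)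
  by (intro Max.boundedI) (auto simp: is_clique_def)

lemma chromatic_number_le:
  "proper_colouring V E k f \<Longrightarrow> chromatic_number V E \<le> k"
  unfolding chromatic_number_def by (rule Least_le) blast

lemma proper_colouring_chromatic_number:
  assumes "finite V" "\<And>x. \<not> E x x"
  obtains f where "proper_colouring V E (chromatic_number V E) f"
proof -
  obtain h where "bij_betw h V {0..<card V}"
    using ex_bij_betw_finite_nat[OF assms(1)] by blast
  then have "proper_colouring V E (card V) h"
    using assms(2) unfolding proper_colouring_def bij_betw_def inj_on_def by auto
  then have "\<exists>k f. proper_colouring V E k f" by blast
  then have "\<exists>f. proper_colouring V E (chromatic_number V E) f"
    unfolding chromatic_number_def by (rule LeastI_ex)
  then show ?thesis using that by blast
qed

lemma proper_colouring_subset: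
  "H \<subseteq> V \<Longrightarrow> proper_colouring V E k f \<Longrightarrow> proper_colouring H E k f"
  unfolding proper_colouring_def by blast

lemma card_clique_le_colours:
  assumes "proper_colouring V E k f" "is_clique V E K"
  shows "card K \<le> k"
proof -
  have "inj_on f K" "f ` K \<subseteq> {..<k}"
    using assms unfolding is_clique_def proper_colouring_def inj_on_def by blast+
  then show ?thesis using card_inj_on_le[of f K "{..<k}"] by simp
qed

lemma clique_number_le_chromatic_number:
  assumes "finite V" "\<And>x. \<not> E x x"
  shows "clique_number V E \<le> chromatic_number V E"
proof -
  obtain f where "proper_colouring V E (chromatic_number V E) f"
    using proper_colouring_chromatic_number assms by blast
  then show ?thesis using clique_number_le[OF assms(1)] card_clique_le_colours by blast
qed

lemma clique_number_eq_chromatic_number: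
  assumes "finite V" "\<And>x. \<not> E x x"
    and "proper_colouring V E k f" "is_clique V E K" "card K = k"
  shows "clique_number V E = chromatic_number V E"
  using clique_number_le_chromatic_number[of V E, OF assms(1,2)] chromatic_number_le[OF assms(3)]
    card_le_clique_number[OF assms(1,4)] assms(5)
  by linarith

lemma clique_number_eq_chromatic_number_if_2_colourable:
  assumes "finite V" "\<And>x. \<not> E x x" "\<And>x y. E x y \<Longrightarrow> E y x"
    and "proper_colouring V E 2 f"
  shows "clique_number V E = chromatic_number V E"
proof (cases "\<exists>x\<in>V. \<exists>y\<in>V. E x y")
  case True
  then obtain x y where xy: "x \<in> V" "y \<in> V" "E x y" by blast
  then have "is_clique V E {x, y}" using assms(3) by (auto simp: is_clique_def)
  moreover have "card {x, y} = 2" using xy(3) assms(2) by (cases "x = y") auto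
  ultimately show ?thesis using clique_number_eq_chromatic_number[of V E, OF assms(1,2,4)] by blast
next
  case edgeless: False
  show ?thesis
  proof (cases "V = {}")
    case True
    then have "proper_colouring V E 0 f" "is_clique V E {}"
      by (auto simp: proper_colouring_def is_clique_def)
    from clique_number_eq_chromatic_number[of V E, OF assms(1,2) this] show ?thesis by simp
  next
    case False
    then obtain x where "x \<in> V" by blast
    then have "proper_colouring V E 1 (\<lambda>_. 0)" "is_clique V E {x}"
      using edgeless by (auto simp: proper_colouring_def is_clique_def)
    from clique_number_eq_chromatic_number[of V E, OF assms(1,2) this] show ?thesis by simp
  qed
qed

lemma perfect_imp_weakly_perfect: "perfect V E \<Longrightarrow> weakly_perfect V E"
  unfolding perfect_def weakly_perfect_def by blast

lemma odd_hole_not_2_colourable: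
  assumes "is_hole V E vs" "odd (length vs)"
  shows "\<not> proper_colouring V E 2 f"
proof
  assume col: "proper_colouring V E 2 f"
  define m where "m = length vs"
  have m: "m \<ge> 4" "set vs \<subseteq> V"
    and adj: "\<And>i j. i < m \<Longrightarrow> j < m \<Longrightarrow> E (vs ! i) (vs ! j) \<longleftrightarrow> (j = Suc i mod m \<or> i = Suc j mod m)"
    using assms(1) unfolding is_hole_def m_def by auto
  have colour: "i < m \<Longrightarrow> f (vs ! i) < 2" for i
    using col m(2) unfolding proper_colouring_def m_def by (meson nth_mem subsetD)
  have differ: "i < m \<Longrightarrow> j < m \<Longrightarrow> E (vs ! i) (vs ! j) \<Longrightarrow> f (vs ! i) \<noteq> f (vs ! j)" for i j
    using col m(2) unfolding proper_colouring_def m_def by (meson nth_mem subsetD)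
  have alternating: "i < m \<Longrightarrow> f (vs ! i) = (f (vs ! 0) + i) mod 2" for i
  proof (induction i)
    case 0
    then show ?case using colour[of 0] by simp
  next
    case (Suc i)
    have "f (vs ! i) \<noteq> f (vs ! Suc i)"
      using Suc.prems differ[of i "Suc i"] adj[of i "Suc i"] by simp
    then show ?case using Suc colour[of i] colour[of "Suc i"] by (auto simp: mod_Suc)
  qed
  have "f (vs ! (m - 1)) \<noteq> f (vs ! 0)"
    using differ[of "m - 1" 0] adj[of "m - 1" 0] m(1) by simp
  moreover have "even (m - 1)" using assms(2) m(1) unfolding m_def by simp
  then obtain q where "m - 1 = 2 * q" by (rule evenE)
  ultimately show False using alternating[of "m - 1"] colour[of 0] m(1) by simp
qed

lemma chromatic_number_ge_3_if_odd_hole: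
  assumes "finite V" "\<And>x. \<not> E x x" "has_odd_hole V E"
  shows "3 \<le> chromatic_number V E"
proof (rule ccontr)
  assume "\<not> 3 \<le> chromatic_number V E"
  moreover obtain f where "proper_colouring V E (chromatic_number V E) f"
    using proper_colouring_chromatic_number assms(1,2) by blast
  ultimately have "proper_colouring V E 2 f" unfolding proper_colouring_def by fastforce
  then show False using assms(3) odd_hole_not_2_colourable unfolding has_odd_hole_def by blast
qed

lemma hole_vertex_nonadjacent_neighbours:
  assumes "is_hole V E vs" "v \<in> set vs"
  obtains u w where "u \<in> set vs" "w \<in> set vs" "E v u" "E v w" "u \<noteq> w" "\<not> E u w"
proof -
  define m where "m = length vs"
  have m: "m \<ge> 4" "distinct vs"
    and adj: "\<And>i j. i < m \<Longrightarrow> j < m \<Longrightarrow> E (vs ! i) (vs ! j) \<longleftrightarrow> (j = Suc i mod m \<or> i = Suc j mod m)"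
    using assms(1) unfolding is_hole_def m_def by auto
  obtain k where k: "k < m" "vs ! k = v" using assms(2) unfolding m_def by (metis in_set_conv_nth)
  have "\<exists>i j. i < m \<and> j < m \<and> i = Suc k mod m \<and> k = Suc j mod m \<and> i \<noteq> j
          \<and> \<not> (j = Suc i mod m \<or> i = Suc j mod m)"
  proof (cases "k = 0")
    case True
    then show ?thesis using m(1) by (intro exI[of _ 1] exI[of _ "m - 1"]) auto
  next
    case False
    show ?thesis
    proof (cases "k = m - 1")
      case True
      then show ?thesis using m(1) by (intro exI[of _ 0] exI[of _ "m - 2"]) auto
    next
      case False
      then show ?thesis using m(1) k(1) \<open>k \<noteq> 0\<close>
        by (intro exI[of _ "Suc k"] exI[of _ "k - 1"]) (auto simp: mod_Suc)
    qed
  qed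
  then obtain i j where ij: "i < m" "j < m" "i = Suc k mod m" "k = Suc j mod m" "i \<noteq> j"
      "\<not> (j = Suc i mod m \<or> i = Suc j mod m)"
    by blast
  show thesis
  proof
    show "vs ! i \<in> set vs" "vs ! j \<in> set vs" using ij(1,2) unfolding m_def by simp_all
    show "E v (vs ! i)" "E v (vs ! j)" using adj[OF k(1) ij(1)] adj[OF k(1) ij(2)] ij(3,4) k(2) by simp_all
    show "vs ! i \<noteq> vs ! j" using m(2) ij(1,2,5) unfolding m_def by (simp add: nth_eq_iff_index_eq)
    show "\<not> E (vs ! i) (vs ! j)" using adj[OF ij(1,2)] ij(6) by simp
  qed
qed

section \<open>Toeplitz graphs with two distances\<close>

lemma toeplitz_adj_irrefl: "\<not> toeplitz_adj n T x x"
  unfolding toeplitz_adj_def by simp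

lemma toeplitz_adj_sym: "toeplitz_adj n T x y \<Longrightarrow> toeplitz_adj n T y x"
  unfolding toeplitz_adj_def by (auto simp: abs_minus_commute)

lemma toeplitz_adj_iff:
  "toeplitz_adj n T x y \<longleftrightarrow>
     x \<in> {1..n} \<and> y \<in> {1..n} \<and> x \<noteq> y \<and> (\<exists>t\<in>T. x + t = y \<or> y + t = x)"
  unfolding toeplitz_adj_def
  by (auto simp: nat_abs_int_diff split: if_splits) (metis le_add_diff_inverse less_or_eq_imp_le nat_le_linear)+

lemma toeplitz_block_colouring:
  assumes "0 < k" and T: "\<And>t. t \<in> T \<Longrightarrow> d dvd t \<and> \<not> k dvd t div d"
  shows "proper_colouring {1..n} (toeplitz_adj n T) k (\<lambda>x. x div d mod k)"
proof -
  have colours_differ: "(x + t) div d mod k \<noteq> x div d mod k" if t: "t \<in> T" for x t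
  proof -
    have "d \<noteq> 0" using T[OF t] by (metis div_by_0 dvd_0_right)
    moreover obtain c where "t = d * c" using T[OF t] by blast
    ultimately have c: "t = d * c" "\<not> k dvd c" "d \<noteq> 0" using T[OF t] by auto
    then have "(x + t) div d = x div d + c" by simp
    then show ?thesis using c(2) by (simp add: mod_eq_dvd_iff_nat)
  qed
  show ?thesis
    unfolding proper_colouring_def
  proof (intro conjI ballI impI)
    show "x div d mod k < k" for x using assms(1) by simp
  next
    fix x y assume "toeplitz_adj n T x y"
    then obtain t where "t \<in> T" "x + t = y \<or> y + t = x" by (auto simp: toeplitz_adj_iff)
    then show "x div d mod k \<noteq> y div d mod k" using colours_differ by metis
  qed
qed

function greedy_colour :: "nat set \<Rightarrow> nat \<Rightarrow> nat \<Rightarrow> nat" where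
  "greedy_colour H d x =
     (if 0 < d \<and> d \<le> x \<and> x - d \<in> H then 1 - greedy_colour H d (x - d)
      else if 0 < d \<and> 2 * d \<le> x \<and> x - 2 * d \<in> H then 1 - greedy_colour H d (x - 2 * d)
      else 0)"
  by auto
termination by (relation "measure (\<lambda>(H, d, x). x)") auto

declare greedy_colour.simps [simp del]

lemma greedy_colour_le_1: "greedy_colour H d x \<le> 1"
  by (subst greedy_colour.simps) auto

text \<open>In a triangle-free \<open>H\<close> the vertices \<open>x - d\<close> and \<open>x - 2d\<close> are not both in \<open>H\<close>,
  so every vertex has at most one lower neighbour, and \<open>greedy_colour\<close> gives it the
  opposite colour.\<close>

lemma greedy_colour_proper:
  fixes n d :: nat
  defines "E \<equiv> toeplitz_adj n {d, 2 * d}"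
  assumes "0 < d" "H \<subseteq> {1..n}"
    and triangle_free: "\<And>x y z. x \<in> H \<Longrightarrow> y \<in> H \<Longrightarrow> z \<in> H \<Longrightarrow> E x y \<Longrightarrow> E y z \<Longrightarrow> E x z \<Longrightarrow> False"
  shows "proper_colouring H E 2 (greedy_colour H d)"
proof -
  have upward: "greedy_colour H d y = 1 - greedy_colour H d x"
    if "x \<in> H" "y \<in> H" "E x y" "x < y" for x y
  proof -
    have "y = x + d \<or> y = x + 2 * d" using that unfolding E_def toeplitz_adj_iff by auto
    then show ?thesis
    proof
      assume "y = x + d"
      then show ?thesis using that(1) assms(2) by (subst greedy_colour.simps) simp
    next
      assume y: "y = x + 2 * d"
      have "x + d \<notin> H"
      proof
        assume "x + d \<in> H"
        moreover have "E x (x + d)" "E (x + d) y"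
          using that(1,2) y assms(2,3) unfolding E_def toeplitz_adj_iff by auto
        ultimately show False using triangle_free that by blast
      qed
      then show ?thesis using that(1) y assms(2)
        by (subst greedy_colour.simps) (simp add: add.commute)
    qed
  qed
  have "greedy_colour H d x \<noteq> greedy_colour H d y" if "x \<in> H" "y \<in> H" "E x y" for x y
  proof (cases x y rule: linorder_cases)
    case less
    then show ?thesis using upward[OF that less] greedy_colour_le_1[of H d x] by arith
  next
    case equal
    then show ?thesis using that(3) toeplitz_adj_irrefl unfolding E_def by metis
  next
    case greater
    moreover have "E y x" using that(3) toeplitz_adj_sym unfolding E_def by metis
    ultimately show ?thesis using upward[of y x] that greedy_colour_le_1[of H d y] by arith
  qed
  moreover have "greedy_colour H d x < 2" for x using greedy_colour_le_1[of H d x] by simp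
  ultimately show ?thesis unfolding proper_colouring_def by blast
qed

text \<open>The lowest vertex of a hole would have two non-adjacent neighbours above it, but these are
  \<open>v + d\<close> and \<open>v + 2d\<close>, which are adjacent.\<close>

lemma toeplitz_d_2d_no_hole:
  assumes "0 < d"
  shows "\<not> is_hole V (toeplitz_adj n {d, 2 * d}) vs"
proof
  let ?E = "toeplitz_adj n {d, 2 * d}"
  assume hole: "is_hole V ?E vs"
  define v where "v = Min (set vs)"
  have "vs \<noteq> []" using hole unfolding is_hole_def by auto
  then have "v \<in> set vs" unfolding v_def by simp
  then obtain u w where uw: "u \<in> set vs" "w \<in> set vs" "?E v u" "?E v w" "u \<noteq> w" "\<not> ?E u w"
    using hole_vertex_nonadjacent_neighbours[OF hole] by blast
  have "v \<le> u" "v \<le> w" using uw(1,2) unfolding v_def by simp_all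
  then have "u = v + d \<or> u = v + 2 * d" "w = v + d \<or> w = v + 2 * d" "u \<in> {1..n}" "w \<in> {1..n}"
    using uw(3,4) unfolding toeplitz_adj_iff by auto
  then have "?E u w" using uw(5) assms unfolding toeplitz_adj_iff by auto
  then show False using uw(6) by contradiction
qed

lemma mult_mod_eq_add_mod_iff:
  fixes a s i j :: nat
  assumes "coprime a s" "i < s" "j < s"
  shows "j * a mod s = (i * a mod s + a) mod s \<longleftrightarrow> j = Suc i mod s"
proof -
  have "(i * a mod s + a) mod s = Suc i * a mod s" by (simp add: mod_add_right_eq add.commute)
  then have "j * a mod s = (i * a mod s + a) mod s \<longleftrightarrow> [j * a = Suc i * a] (mod s)"
    by (simp add: cong_def)
  also have "\<dots> \<longleftrightarrow> [j = Suc i] (mod s)" using cong_mult_rcancel_nat[OF assms(1)] .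
  also have "\<dots> \<longleftrightarrow> j = Suc i mod s" using assms(3) by (simp add: cong_def)
  finally show ?thesis .
qed

lemma eq_add_mod_iff:
  fixes a b p q :: nat
  assumes "p < a + b" "q < a + b"
  shows "q = (p + a) mod (a + b) \<longleftrightarrow> p + a = q \<or> q + b = p"
proof (cases "p + a < a + b")
  case True
  then show ?thesis using assms by auto
next
  case False
  then have "(p + a) mod (a + b) = p + a - (a + b)" using assms by (simp add: le_mod_geq)
  then show ?thesis using assms False by auto
qed

lemma toeplitz_adj_scaled_iff:
  fixes d a b p q :: nat
  assumes "0 < d" "0 < a" "0 < b" "d * p < n" "d * q < n"
  shows "toeplitz_adj n {d * a, d * b} (d * p + 1) (d * q + 1) \<longleftrightarrow>
           p + a = q \<or> q + a = p \<or> p + b = q \<or> q + b = p"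
  using assms unfolding toeplitz_adj_iff by (auto simp: add_mult_distrib2[symmetric])

text \<open>Adding \<open>a\<close> modulo \<open>s = a + b\<close> means adding \<open>a\<close> or subtracting \<open>b\<close>, so consecutive
  vertices of the cycle are adjacent; coprimality makes \<open>i \<mapsto> i a mod s\<close> injective on
  \<open>{0..<s}\<close> and excludes chords.\<close>

lemma toeplitz_odd_hole:
  fixes a b d n :: nat
  assumes "0 < d" "coprime a b" "0 < a" "a < b" "odd (a + b)" "a + b \<noteq> 3" "d * (a + b) \<le> n"
  shows "has_odd_hole {1..n} (toeplitz_adj n {d * a, d * b})"
proof -
  define s where "s = a + b"
  let ?E = "toeplitz_adj n {d * a, d * b}"
  have coprime: "coprime a s" using assms(2) unfolding s_def by (simp add: coprime_iff_gcd_eq_1 gcd.commute[of a] add.commute[of a])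
  have s5: "5 \<le> s" using assms(3-6) unfolding s_def by presburger
  define p where "p i = i * a mod s" for i
  define vs where "vs = map (\<lambda>i. d * p i + 1) [0..<s]"
  have len: "length vs = s" and nth: "\<And>i. i < s \<Longrightarrow> vs ! i = d * p i + 1"
    unfolding vs_def by simp_all
  have p_less: "p i < s" for i unfolding p_def using s5 by simp
  have p_inj: "inj_on p {0..<s}"
  proof (rule inj_onI)
    fix i j assume "i \<in> {0..<s}" "j \<in> {0..<s}" "p i = p j"
    then show "i = j" using cong_mult_rcancel_nat[OF coprime, of i j] unfolding p_def cong_def by simp
  qed
  have in_range: "d * p i < n" for i
  proof -
    have "d * p i < d * s" using p_less assms(1) by simp
    then show ?thesis using assms(7) unfolding s_def by linarith
  qed
  have adj: "?E (vs ! i) (vs ! j) \<longleftrightarrow> j = Suc i mod s \<or> i = Suc j mod s" if "i < s" "j < s" for i j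
  proof -
    have "?E (vs ! i) (vs ! j) \<longleftrightarrow> p i + a = p j \<or> p j + a = p i \<or> p i + b = p j \<or> p j + b = p i"
      using toeplitz_adj_scaled_iff[OF assms(1,3) _ in_range in_range] assms(3,4) nth that by simp
    also have "\<dots> \<longleftrightarrow> p j = (p i + a) mod s \<or> p i = (p j + a) mod s"
      using eq_add_mod_iff[of "p i" a b "p j"] eq_add_mod_iff[of "p j" a b "p i"] p_less
      unfolding s_def by auto
    also have "\<dots> \<longleftrightarrow> j = Suc i mod s \<or> i = Suc j mod s"
      using mult_mod_eq_add_mod_iff[OF coprime] that unfolding p_def by simp
    finally show ?thesis .
  qed
  have "is_hole {1..n} ?E vs"
    unfolding is_hole_def len
  proof (intro conjI allI impI)
    show "4 \<le> s" using s5 by simp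
    show "distinct vs" unfolding vs_def distinct_map using p_inj assms(1) by (auto simp: inj_on_def)
    show "set vs \<subseteq> {1..n}" unfolding vs_def using in_range by (auto simp: Suc_le_eq)
  qed (rule adj)
  moreover have "odd (length vs)" using assms(5) len unfolding s_def by simp
  ultimately show ?thesis unfolding has_odd_hole_def by blast
qed

lemma toeplitz_triangle_imp_double:
  assumes "1 \<le> t1" "t1 < t2"
    and "toeplitz_adj n {t1, t2} x y" "toeplitz_adj n {t1, t2} y z" "toeplitz_adj n {t1, t2} x z"
  shows "t2 = 2 * t1"
  using assms unfolding toeplitz_adj_iff by auto

lemma toeplitz_clique_number_le_2:
  assumes "1 \<le> t1" "t1 < t2" "t2 \<noteq> 2 * t1"
  shows "clique_number {1..n} (toeplitz_adj n {t1, t2}) \<le> 2"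
proof (rule clique_number_le)
  fix K assume K: "is_clique {1..n} (toeplitz_adj n {t1, t2}) K"
  show "card K \<le> 2"
  proof (rule ccontr)
    assume "\<not> card K \<le> 2"
    then obtain L where "L \<subseteq> K" "card L = 3" using obtain_subset_with_card_n[of 3 K] by auto
    then obtain x y z where "x \<in> K" "y \<in> K" "z \<in> K" "x \<noteq> y" "y \<noteq> z" "x \<noteq> z"
      unfolding card_3_iff by auto
    then show False
      using K toeplitz_triangle_imp_double[OF assms(1,2)] assms(3) unfolding is_clique_def by metis
  qed
qed simp

lemma toeplitz_odd_multiples_perfect:
  assumes "0 < d" "odd a" "odd b"
  shows "\<not> has_odd_hole {1..n} (toeplitz_adj n {d * a, d * b})"
    and "perfect {1..n} (toeplitz_adj n {d * a, d * b})"
proof -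
  let ?E = "toeplitz_adj n {d * a, d * b}"
  have colouring: "proper_colouring {1..n} ?E 2 (\<lambda>x. x div d mod 2)"
    using assms by (intro toeplitz_block_colouring) auto
  then show "\<not> has_odd_hole {1..n} ?E"
    unfolding has_odd_hole_def using odd_hole_not_2_colourable by blast
  show "perfect {1..n} ?E"
    unfolding perfect_def
  proof (intro allI impI)
    fix H assume "H \<subseteq> {1..n}"
    then show "clique_number H ?E = chromatic_number H ?E"
      using colouring proper_colouring_subset toeplitz_adj_irrefl toeplitz_adj_sym finite_subset
      by (metis clique_number_eq_chromatic_number_if_2_colourable finite_atLeastAtMost)
  qed
qed

lemma toeplitz_d_2d_perfect:
  assumes "0 < d"
  shows "\<not> has_odd_hole {1..n} (toeplitz_adj n {d, 2 * d})"
    and "perfect {1..n} (toeplitz_adj n {d, 2 * d})"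
proof -
  let ?E = "toeplitz_adj n {d, 2 * d}"
  show "\<not> has_odd_hole {1..n} ?E"
    unfolding has_odd_hole_def using toeplitz_d_2d_no_hole[OF assms] by blast
  have colouring: "proper_colouring {1..n} ?E 3 (\<lambda>x. x div d mod 3)"
    using assms by (intro toeplitz_block_colouring) auto
  show "perfect {1..n} ?E"
    unfolding perfect_def
  proof (intro allI impI)
    fix H assume H: "H \<subseteq> {1..n}"
    then have "finite H" by (rule finite_subset) simp
    show "clique_number H ?E = chromatic_number H ?E"
    proof (cases "\<exists>x\<in>H. \<exists>y\<in>H. \<exists>z\<in>H. ?E x y \<and> ?E y z \<and> ?E x z")
      case True
      then obtain x y z where xyz: "x \<in> H" "y \<in> H" "z \<in> H" "?E x y" "?E y z" "?E x z" by blast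
      then have "is_clique H ?E {x, y, z}" using toeplitz_adj_sym unfolding is_clique_def by blast
      moreover have "card {x, y, z} = 3" using xyz(4-6) toeplitz_adj_irrefl by (metis card_3_iff)
      ultimately show ?thesis
        using clique_number_eq_chromatic_number \<open>finite H\<close> toeplitz_adj_irrefl
          proper_colouring_subset[OF H colouring] by metis
    next
      case False
      then have "proper_colouring H ?E 2 (greedy_colour H d)"
        using greedy_colour_proper[OF assms H] by blast
      then show ?thesis
        using clique_number_eq_chromatic_number_if_2_colourable \<open>finite H\<close> toeplitz_adj_irrefl
          toeplitz_adj_sym by metis
    qed
  qed
qed

lemma toeplitz_coprime_perfect:
  assumes "0 < d" "coprime a b" "a < b" "even (a + b) \<or> a + b = 3"
  shows "\<not> has_odd_hole {1..n} (toeplitz_adj n {d * a, d * b})"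
    and "perfect {1..n} (toeplitz_adj n {d * a, d * b})"
proof -
  consider "odd a" "odd b" | "a = 1" "b = 2"
  proof (cases "even (a + b)")
    case True
    have "odd a"
    proof
      assume "even a"
      with True have "even b" by simp
      with \<open>even a\<close> show False using assms(2) by (metis coprime_common_divisor odd_one)
    qed
    then show thesis using True that(1) by simp
  next
    case False
    then have "a + b = 3" using assms(4) by blast
    moreover have "a \<noteq> 0"
    proof
      assume "a = 0"
      then show False using assms(2) \<open>a + b = 3\<close> by simp
    qed
    ultimately show thesis using that(2) assms(3) by linarith
  qed
  then have "\<not> has_odd_hole {1..n} (toeplitz_adj n {d * a, d * b}) \<and> perfect {1..n} (toeplitz_adj n {d * a, d * b})"
  proof cases
    case 1
    then show ?thesis using toeplitz_odd_multiples_perfect assms(1) by blast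
  next
    case 2
    then show ?thesis using toeplitz_d_2d_perfect assms(1) by (simp add: mult.commute)
  qed
  then show "\<not> has_odd_hole {1..n} (toeplitz_adj n {d * a, d * b})"
    and "perfect {1..n} (toeplitz_adj n {d * a, d * b})" by blast+
qed

lemma toeplitz_coprime_not_weakly_perfect:
  assumes "0 < d" "coprime a b" "0 < a" "a < b" "odd (a + b)" "a + b \<noteq> 3" "d * (a + b) \<le> n"
  shows "has_odd_hole {1..n} (toeplitz_adj n {d * a, d * b})"
    and "\<not> weakly_perfect {1..n} (toeplitz_adj n {d * a, d * b})"
proof -
  show hole: "has_odd_hole {1..n} (toeplitz_adj n {d * a, d * b})"
    using toeplitz_odd_hole assms by blast
  have "b \<noteq> 2 * a"
  proof
    assume "b = 2 * a"
    then have "a = 1" using assms(2) by simp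
    then show False using \<open>b = 2 * a\<close> assms(6) by simp
  qed
  then have "clique_number {1..n} (toeplitz_adj n {d * a, d * b}) \<le> 2"
    using assms(1,3,4) by (intro toeplitz_clique_number_le_2) auto
  moreover have "3 \<le> chromatic_number {1..n} (toeplitz_adj n {d * a, d * b})"
    using hole toeplitz_adj_irrefl by (intro chromatic_number_ge_3_if_odd_hole) auto
  ultimately show "\<not> weakly_perfect {1..n} (toeplitz_adj n {d * a, d * b})"
    unfolding weakly_perfect_def by linarith
qed

theorem theorem3p7:
  fixes t1 t2 n :: nat
  assumes "1 \<le> t1" and "t1 < t2" and "t1 + t2 \<le> n"
  defines "d \<equiv> gcd t1 t2"
  defines "V \<equiv> toeplitz_vertices n"
  defines "E \<equiv> toeplitz_adj n {t1, t2}"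
  shows "((even ((t1 + t2) div d) \<or> (t1 + t2) div d = 3) \<longleftrightarrow> \<not> has_odd_hole V E)
       \<and> (\<not> has_odd_hole V E \<longleftrightarrow> perfect V E)
       \<and> (perfect V E \<longleftrightarrow> weakly_perfect V E)"
proof -
  define a b where "a = t1 div d" and "b = t2 div d"
  have "0 < d" using assms(1) unfolding d_def by simp
  have t: "t1 = d * a" "t2 = d * b" unfolding a_def b_def d_def by simp_all
  have "coprime a b" unfolding a_def b_def d_def using assms(1) div_gcd_coprime[of t1 t2] by simp
  have "0 < a" "a < b" using assms(1,2) \<open>0 < d\<close> t by auto
  have sum: "(t1 + t2) div d = a + b" using \<open>0 < d\<close> t by (simp flip: add_mult_distrib2)
  have V: "V = {1..n}" unfolding V_def toeplitz_vertices_def ..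
  have "\<not> has_odd_hole V E" "perfect V E" if "even (a + b) \<or> a + b = 3"
    using toeplitz_coprime_perfect[OF \<open>0 < d\<close> \<open>coprime a b\<close> \<open>a < b\<close> that] unfolding V E_def t by simp_all
  moreover have "has_odd_hole V E" "\<not> weakly_perfect V E" if "\<not> (even (a + b) \<or> a + b = 3)"
    using toeplitz_coprime_not_weakly_perfect[OF \<open>0 < d\<close> \<open>coprime a b\<close> \<open>0 < a\<close> \<open>a < b\<close>] that assms(3)
    unfolding V E_def t by (simp_all add: add_mult_distrib2)
  ultimately show ?thesis unfolding sum using perfect_imp_weakly_perfect by blast
qed

end
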